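(* Let $\mathcal{H}=(V,E)$ be a linear hypergraph with $n$ vertices such that for every $e\in E$ there exists $x\in e$ with $\mathrm{deg}_{\mathcal{H}}(x)\le|e|$. Then $\mathrm{q}(\mathcal{H})\le n$.
   Context: A hypergraph $\mathcal{H}=(V,E)$ has a finite vertex set $V$ and a finite set $E$ of nonempty subsets of $V$ (hyperedges); linear means distinct hyperedges share at most one vertex. $\mathrm{deg}_{\mathcal{H}}(x)$ is the number of hyperedges containing $x$. The chromatic index $\mathrm{q}(\mathcal{H})$ is the least number of colors in a coloring of hyperedges where distinct intersecting hyperedges get different colors. *)

theory Defs
  imports Main
begin

definition hypergraph :: "'a set \<Rightarrow> 'a set set \<Rightarrow> bool" where
  "hypergraph V E \<longleftrightarrow> finite V \<and> finite E \<and> (\<forall>e\<in>E. e \<noteq> {} \<and> e \<subseteq> V)"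

definition linear_hypergraph :: "'a set \<Rightarrow> 'a set set \<Rightarrow> bool" where
  "linear_hypergraph V E \<longleftrightarrow> hypergraph V E \<and>
     (\<forall>e\<in>E. \<forall>f\<in>E. e \<noteq> f \<longrightarrow> card (e \<inter> f) \<le> 1)"

definition hdeg :: "'a set set \<Rightarrow> 'a \<Rightarrow> nat" where
  "hdeg E x = card {e\<in>E. x \<in> e}"

definition proper_edge_colouring :: "'a set set \<Rightarrow> nat \<Rightarrow> ('a set \<Rightarrow> nat) \<Rightarrow> bool" where
  "proper_edge_colouring E k c \<longleftrightarrow> (\<forall>e\<in>E. c e < k) \<and>
     (\<forall>e\<in>E. \<forall>f\<in>E. e \<noteq> f \<and> e \<inter> f \<noteq> {} \<longrightarrow> c e \<noteq> c f)"

definition chromatic_index :: "'a set set \<Rightarrow> nat" where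
  "chromatic_index E = (LEAST k. \<exists>c. proper_edge_colouring E k c)"

end

theory Submission
  imports Defs
begin

text \<open>Greedy colouring: delete an edge e of minimum size k, colour the rest with n colours
  by induction, and give e a colour unused by its neighbours. There are fewer than n of them:
  at most k - 1 pass through the vertex x of e with deg x \<le> k, and the edges meeting e
  elsewhere number at most n - k. For the latter, each such edge f meets e in a single vertex,
  so it has at least k - 1 vertices outside e; conversely, by linearity, a vertex z outside e
  lies on at most k - 1 of them, one for each vertex of e - {x}. Double counting the incidences
  with V - e gives the bound.\<close>

definition edge_neighbours :: "'a set set \<Rightarrow> 'a set \<Rightarrow> 'a set set" where
  "edge_neighbours E e = {f\<in>E. f \<noteq> e \<and> f \<inter> e \<noteq> {}}"

lemma linear_hypergraph_subset:
  assumes "linear_hypergraph V E" and "E' \<subseteq> E"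
  shows "linear_hypergraph V E'"
  using assms unfolding linear_hypergraph_def hypergraph_def by (meson finite_subset subsetD)

lemma hdeg_subset_le:
  assumes "finite E" and "E' \<subseteq> E"
  shows "hdeg E' x \<le> hdeg E x"
  unfolding hdeg_def using assms by (intro card_mono) auto

lemma linear_hypergraph_finite_edge:
  assumes "linear_hypergraph V E" and "e \<in> E"
  shows "finite e"
  using assms unfolding linear_hypergraph_def hypergraph_def by (meson finite_subset)

lemma linear_hypergraph_Int_eq_singleton:
  assumes lin: "linear_hypergraph V E" and "e \<in> E" "f \<in> E" "e \<noteq> f" and "y \<in> e \<inter> f"
  shows "e \<inter> f = {y}"
proof -
  have "card (e \<inter> f) \<le> 1"
    using assms unfolding linear_hypergraph_def by blast
  moreover have "finite (e \<inter> f)"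
    using linear_hypergraph_finite_edge[OF lin \<open>e \<in> E\<close>] by simp
  ultimately have "\<forall>a\<in>e \<inter> f. \<forall>b\<in>e \<inter> f. a = b"
    by (simp add: card_le_Suc0_iff_eq)
  then show ?thesis
    using \<open>y \<in> e \<inter> f\<close> by auto
qed

lemma card_Diff_meeting_edge:
  assumes lin: "linear_hypergraph V E" and "e \<in> E" "f \<in> E" "e \<noteq> f" and "e \<inter> f \<noteq> {}"
  shows "card (f - e) = card f - 1"
proof -
  from \<open>e \<inter> f \<noteq> {}\<close> obtain y where "e \<inter> f = {y}"
    using linear_hypergraph_Int_eq_singleton[OF assms(1-4)] by blast
  then show ?thesis
    using linear_hypergraph_finite_edge[OF lin \<open>f \<in> E\<close>] card_Diff_subset_Int[of f e]
    by (simp add: Int_commute)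
qed

lemma card_edges_through_meeting_avoiding_le:
  assumes lin: "linear_hypergraph V E" and eE: "e \<in> E" and "z \<notin> e"
  shows "card {f\<in>E. z \<in> f \<and> f \<inter> e \<noteq> {} \<and> x \<notin> f} \<le> card (e - {x})"
proof (rule card_inj_on_le)
  let ?F = "{f\<in>E. z \<in> f \<and> f \<inter> e \<noteq> {} \<and> x \<notin> f}"
  have meet: "f \<inter> e = {the_elem (f \<inter> e)}" if "f \<in> ?F" for f
  proof -
    from that obtain y where "y \<in> f \<inter> e" by blast
    with that eE \<open>z \<notin> e\<close> have "f \<inter> e = {y}"
      by (intro linear_hypergraph_Int_eq_singleton[OF lin]) auto
    then show ?thesis by simp
  qed
  show "inj_on (\<lambda>f. the_elem (f \<inter> e)) ?F"
  proof (rule inj_onI)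
    fix f g assume f: "f \<in> ?F" and g: "g \<in> ?F"
      and same: "the_elem (f \<inter> e) = the_elem (g \<inter> e)"
    let ?y = "the_elem (f \<inter> e)"
    have "{?y, z} \<subseteq> f \<inter> g"
      using meet[OF f] meet[OF g] same f g by blast
    moreover have "?y \<noteq> z"
      using meet[OF f] \<open>z \<notin> e\<close> by blast
    ultimately have "\<not> f \<inter> g = {z}" by blast
    then show "f = g"
      using f g linear_hypergraph_Int_eq_singleton[OF lin, of f g z] by blast
  qed
  show "(\<lambda>f. the_elem (f \<inter> e)) ` ?F \<subseteq> e - {x}"
    using meet by blast
  show "finite (e - {x})"
    using linear_hypergraph_finite_edge[OF lin eE] by simp
qed

lemma card_edges_meeting_avoiding_le:
  assumes lin: "linear_hypergraph V E" and eE: "e \<in> E"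
    and min: "\<forall>f\<in>E. card e \<le> card f" and "x \<in> e"
  shows "card {f\<in>E. f \<inter> e \<noteq> {} \<and> x \<notin> f} \<le> card V - card e"
proof -
  let ?B = "{f\<in>E. f \<inter> e \<noteq> {} \<and> x \<notin> f}"
  define k where "k = card e"
  have finV: "finite V" and finE: "finite E" and edges_in_V: "\<forall>f\<in>E. f \<subseteq> V"
    using lin unfolding linear_hypergraph_def hypergraph_def by auto
  have finB: "finite ?B" using finE by simp
  have eV: "e \<subseteq> V" using edges_in_V eE by blast
  have "k \<noteq> 0"
    using \<open>x \<in> e\<close> linear_hypergraph_finite_edge[OF lin eE] k_def by auto
  show ?thesis
  proof (cases "k = 1")
    case True
    then have "e = {x}"
      using \<open>x \<in> e\<close> k_def by (metis card_1_singletonE singletonD)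
    then show ?thesis by simp
  next
    case False
    have outside: "k - 1 \<le> card {z\<in>V - e. z \<in> f}" if "f \<in> ?B" for f
    proof -
      from that have "f \<in> E" "e \<noteq> f" "e \<inter> f \<noteq> {}"
        using \<open>x \<in> e\<close> by blast+
      then have "card (f - e) = card f - 1"
        using card_Diff_meeting_edge[OF lin eE] by blast
      moreover have "{z\<in>V - e. z \<in> f} = f - e" using edges_in_V \<open>f \<in> E\<close> by blast
      ultimately show ?thesis using min \<open>f \<in> E\<close> k_def by (simp add: diff_le_mono)
    qed
    have "card ?B * (k - 1) = (\<Sum>f\<in>?B. k - 1)" by simp
    also have "\<dots> \<le> (\<Sum>f\<in>?B. card {z\<in>V - e. z \<in> f})"
      using outside by (rule sum_mono)
    also have "\<dots> = (\<Sum>z\<in>V - e. card {f\<in>?B. z \<in> f})"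
      using finB finV by (intro sum_multicount_gen) auto
    also have "\<dots> \<le> (\<Sum>z\<in>V - e. k - 1)"
    proof (intro sum_mono)
      fix z assume z: "z \<in> V - e"
      have "{f\<in>?B. z \<in> f} = {f\<in>E. z \<in> f \<and> f \<inter> e \<noteq> {} \<and> x \<notin> f}" by blast
      then show "card {f\<in>?B. z \<in> f} \<le> k - 1"
        using card_edges_through_meeting_avoiding_le[OF lin eE, of z x] z \<open>x \<in> e\<close>
          linear_hypergraph_finite_edge[OF lin eE] k_def by simp
    qed
    also have "\<dots> = (card V - k) * (k - 1)"
      using card_Diff_subset[OF finite_subset[OF eV finV] eV] k_def by simp
    finally show ?thesis
      using False \<open>k \<noteq> 0\<close> k_def by simp
  qed
qed

lemma card_edge_neighbours_less:
  assumes lin: "linear_hypergraph V E" and eE: "e \<in> E"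
    and min: "\<forall>f\<in>E. card e \<le> card f" and "x \<in> e" and deg: "hdeg E x \<le> card e"
  shows "card (edge_neighbours E e) < card V"
proof -
  let ?A = "{f\<in>E. x \<in> f} - {e}"
  let ?B = "{f\<in>E. f \<inter> e \<noteq> {} \<and> x \<notin> f}"
  have finV: "finite V" and finE: "finite E" and eV: "e \<subseteq> V"
    using lin eE unfolding linear_hypergraph_def hypergraph_def by auto
  have "card e \<noteq> 0"
    using \<open>x \<in> e\<close> linear_hypergraph_finite_edge[OF lin eE] by auto
  moreover have "card e \<le> card V" using card_mono[OF finV eV] .
  moreover have "card ?A = hdeg E x - 1"
    unfolding hdeg_def using eE \<open>x \<in> e\<close> finE by (subst card_Diff_singleton) auto
  moreover have "card ?B \<le> card V - card e"
    using card_edges_meeting_avoiding_le[OF lin eE min \<open>x \<in> e\<close>] .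
  moreover have "card (edge_neighbours E e) \<le> card ?A + card ?B"
  proof -
    have "edge_neighbours E e \<subseteq> ?A \<union> ?B" unfolding edge_neighbours_def by blast
    then have "card (edge_neighbours E e) \<le> card (?A \<union> ?B)"
      using finE by (intro card_mono) auto
    then show ?thesis using card_Un_le[of ?A ?B] by linarith
  qed
  ultimately show ?thesis using deg by linarith
qed

lemma proper_edge_colouring_insert:
  assumes "finite E" and "e \<in> E" and c: "proper_edge_colouring (E - {e}) k c"
    and few: "card (edge_neighbours E e) < k"
  shows "\<exists>c'. proper_edge_colouring E k c'"
proof -
  have finN: "finite (edge_neighbours E e)"
    using \<open>finite E\<close> unfolding edge_neighbours_def by simp
  then have "card (c ` edge_neighbours E e) < card {0..<k}"
    using few card_image_le[of "edge_neighbours E e" c] by simp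
  then have "\<not> {0..<k} \<subseteq> c ` edge_neighbours E e"
    using card_mono[OF finite_imageI[OF finN]] by (meson leD)
  then obtain j where "j < k" and j_free: "j \<notin> c ` edge_neighbours E e"
    by (force simp: subset_iff)
  have "proper_edge_colouring E k (c(e := j))"
    unfolding proper_edge_colouring_def
  proof (intro conjI ballI impI)
    fix f assume "f \<in> E"
    then show "(c(e := j)) f < k"
      using c \<open>j < k\<close> unfolding proper_edge_colouring_def by auto
  next
    fix f g assume "f \<in> E" "g \<in> E" and "f \<noteq> g \<and> f \<inter> g \<noteq> {}"
    then show "(c(e := j)) f \<noteq> (c(e := j)) g"
      using c j_free unfolding proper_edge_colouring_def edge_neighbours_def
      by (cases "f = e"; cases "g = e") (auto simp: Int_commute)
  qed
  then show ?thesis by blast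
qed

lemma proper_edge_colouring_exists:
  assumes "linear_hypergraph V E" and "\<forall>e\<in>E. \<exists>x\<in>e. hdeg E x \<le> card e"
  shows "\<exists>c. proper_edge_colouring E (card V) c"
  using assms
proof (induction "card E" arbitrary: E rule: less_induct)
  case less
  show ?case
  proof (cases "E = {}")
    case True
    then show ?thesis unfolding proper_edge_colouring_def by simp
  next
    case False
    have finE: "finite E"
      using less.prems unfolding linear_hypergraph_def hypergraph_def by blast
    obtain e where eE: "e \<in> E" and min: "\<forall>f\<in>E. card e \<le> card f"
      using False ex_has_least_nat[of "\<lambda>e. e \<in> E" _ card] by blast
    obtain x where "x \<in> e" and deg: "hdeg E x \<le> card e"
      using less.prems(2) eE by blast
    have "card (E - {e}) < card E"
      using card_Diff1_less[OF finE eE] .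
    moreover have "linear_hypergraph V (E - {e})"
      using linear_hypergraph_subset[OF less.prems(1)] by blast
    moreover have "\<forall>f\<in>E - {e}. \<exists>x\<in>f. hdeg (E - {e}) x \<le> card f"
      using less.prems(2) hdeg_subset_le[OF finE, of "E - {e}"] by (meson DiffD1 Diff_subset le_trans)
    ultimately obtain c where "proper_edge_colouring (E - {e}) (card V) c"
      using less.hyps by blast
    then show ?thesis
      using proper_edge_colouring_insert[OF finE eE]
        card_edge_neighbours_less[OF less.prems(1) eE min \<open>x \<in> e\<close> deg] by blast
  qed
qed

lemma chromatic_index_le:
  assumes "proper_edge_colouring E k c"
  shows "chromatic_index E \<le> k"
  unfolding chromatic_index_def using assms by (metis Least_le)

theorem corollary5p5:
  fixes V :: "'a set" and E :: "'a set set" and n :: nat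
  assumes "linear_hypergraph V E"
    and "card V = n"
    and "\<forall>e\<in>E. \<exists>x\<in>e. hdeg E x \<le> card e"
  shows "chromatic_index E \<le> n"
  using proper_edge_colouring_exists[OF assms(1,3)] chromatic_index_le assms(2) by blast

end
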